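(* Let $(G,O)$ be an equipped group and $s_1,s_2\in S(G,O)$. The following are equivalent: (i) $s_1$ and $s_2$ are $r$-equivalent; (ii) $s_1$ and $s_2$ are $l$-equivalent; (iii) $s_1$ and $s_2$ are equivalent.
   Context: An equipped group is a pair $(G,O)$, $G$ a group, $O\subset G$ a union of finitely many conjugacy classes, $1\notin O$. The factorization semigroup $S(G,O)$ is generated by symbols $x_g$, $g\in O$, subject to $x_{g_1}x_{g_2}=x_{g_2}x_{g_2^{-1}g_1g_2}=x_{g_1g_2g_1^{-1}}x_{g_1}$ ($g_1,g_2\in O$). Elements $s_1,s_2$ of a semigroup $S$ are $r$-equivalent (resp. $l$-equivalent) if there is $s_3\in S$ with $s_1s_3=s_2s_3$ (resp. $s_3s_1=s_3s_2$), and equivalent if there are $s_3,s_4\in S$ with $s_3s_1s_4=s_3s_2s_4$. *)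

theory Defs
  imports "HOL-Algebra.Group"
begin

definition conj_class :: "('a, 'b) monoid_scheme \<Rightarrow> 'a \<Rightarrow> 'a set" where
  "conj_class G g = {h \<otimes>\<^bsub>G\<^esub> g \<otimes>\<^bsub>G\<^esub> inv\<^bsub>G\<^esub> h | h. h \<in> carrier G}"

definition equipped_group :: "('a, 'b) monoid_scheme \<Rightarrow> 'a set \<Rightarrow> bool" where
  "equipped_group G Ob \<longleftrightarrow> group G \<and> Ob \<subseteq> carrier G \<and> \<one>\<^bsub>G\<^esub> \<notin> Ob \<and>
     (\<exists>C. finite C \<and> C \<subseteq> carrier G \<and> Ob = (\<Union>g\<in>C. conj_class G g))"

(* Words in the generators x_g (g \<in> Ob) are represented as lists of elements of Ob.
   One elementary application of a defining relation of S(G,Ob) inside a word. *)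
inductive fact_step :: "('a, 'b) monoid_scheme \<Rightarrow> 'a set \<Rightarrow> 'a list \<Rightarrow> 'a list \<Rightarrow> bool"
  for G Ob where
  rel1: "g1 \<in> Ob \<Longrightarrow> g2 \<in> Ob \<Longrightarrow>
     fact_step G Ob (u @ [g1, g2] @ v) (u @ [g2, inv\<^bsub>G\<^esub> g2 \<otimes>\<^bsub>G\<^esub> g1 \<otimes>\<^bsub>G\<^esub> g2] @ v)"
| rel2: "g1 \<in> Ob \<Longrightarrow> g2 \<in> Ob \<Longrightarrow>
     fact_step G Ob (u @ [g1, g2] @ v) (u @ [g1 \<otimes>\<^bsub>G\<^esub> g2 \<otimes>\<^bsub>G\<^esub> inv\<^bsub>G\<^esub> g1, g1] @ v)"

definition fact_eq :: "('a, 'b) monoid_scheme \<Rightarrow> 'a set \<Rightarrow> 'a list \<Rightarrow> 'a list \<Rightarrow> bool" where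
  "fact_eq G Ob = equivclp (fact_step G Ob)"

(* Elements of S(G,Ob): (classes of) nonempty words in the generators x_g, g \<in> Ob. *)
definition fact_word :: "'a set \<Rightarrow> 'a list \<Rightarrow> bool" where
  "fact_word Ob w \<longleftrightarrow> w \<noteq> [] \<and> set w \<subseteq> Ob"

definition r_equiv :: "('a, 'b) monoid_scheme \<Rightarrow> 'a set \<Rightarrow> 'a list \<Rightarrow> 'a list \<Rightarrow> bool" where
  "r_equiv G Ob s1 s2 \<longleftrightarrow> (\<exists>s3. fact_word Ob s3 \<and> fact_eq G Ob (s1 @ s3) (s2 @ s3))"

definition l_equiv :: "('a, 'b) monoid_scheme \<Rightarrow> 'a set \<Rightarrow> 'a list \<Rightarrow> 'a list \<Rightarrow> bool" where
  "l_equiv G Ob s1 s2 \<longleftrightarrow> (\<exists>s3. fact_word Ob s3 \<and> fact_eq G Ob (s3 @ s1) (s3 @ s2))"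

definition s_equiv :: "('a, 'b) monoid_scheme \<Rightarrow> 'a set \<Rightarrow> 'a list \<Rightarrow> 'a list \<Rightarrow> bool" where
  "s_equiv G Ob s1 s2 \<longleftrightarrow> (\<exists>s3 s4. fact_word Ob s3 \<and> fact_word Ob s4 \<and>
       fact_eq G Ob (s3 @ s1 @ s4) (s3 @ s2 @ s4))"

end

theory Submission
  imports Defs
begin

text \<open>
  Multiplying out a word is invariant under the defining relations, so equivalent words
  have the same product in \<open>G\<close>. Since \<open>O\<close> is closed under conjugation, a word
  \<open>t\<close> can be moved past any word \<open>w\<close> at the cost of conjugating its letters by the product
  of \<open>w\<close>: \<open>t w = w t\<^sup>w\<close>. Hence if \<open>s\<^sub>3 s\<^sub>1 s\<^sub>4 = s\<^sub>3 s\<^sub>2 s\<^sub>4\<close>, and therefore \<open>s\<^sub>1\<close>, \<open>s\<^sub>2\<close> have the same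
  product \<open>p\<close>, then \<open>s\<^sub>1 s\<^sub>3\<^sup>p s\<^sub>4 = s\<^sub>2 s\<^sub>3\<^sup>p s\<^sub>4\<close>, and symmetrically on the left.
\<close>

lemma fact_step_append_context:
  assumes "fact_step G Ob x y"
  shows "fact_step G Ob (p @ x @ q) (p @ y @ q)"
  using assms
proof cases
  case (rel1 g1 g2 u v)
  then show ?thesis using fact_step.rel1[of g1 Ob g2 G "p @ u" "v @ q"] by simp
next
  case (rel2 g1 g2 u v)
  then show ?thesis using fact_step.rel2[of g1 Ob g2 G "p @ u" "v @ q"] by simp
qed

lemma fact_eq_append_context:
  assumes "fact_eq G Ob x y"
  shows "fact_eq G Ob (p @ x @ q) (p @ y @ q)"
  using assms unfolding fact_eq_def
proof (induction rule: equivclp_induct)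
  case base
  then show ?case by simp
next
  case (step y z)
  then show ?case by (metis fact_step_append_context equivclp_into_equivclp)
qed

lemma fact_eq_refl: "fact_eq G Ob x x"
  unfolding fact_eq_def by simp

lemma fact_eq_sym: "fact_eq G Ob x y \<Longrightarrow> fact_eq G Ob y x"
  unfolding fact_eq_def by (rule equivclp_sym)

lemma fact_eq_trans: "fact_eq G Ob x y \<Longrightarrow> fact_eq G Ob y z \<Longrightarrow> fact_eq G Ob x z"
  unfolding fact_eq_def by (rule equivclp_trans)

definition conj_closed :: "('a, 'b) monoid_scheme \<Rightarrow> 'a set \<Rightarrow> bool" where
  "conj_closed G Ob \<longleftrightarrow> Ob \<subseteq> carrier G \<and>
     (\<forall>g\<in>Ob. \<forall>a\<in>carrier G. a \<otimes>\<^bsub>G\<^esub> g \<otimes>\<^bsub>G\<^esub> inv\<^bsub>G\<^esub> a \<in> Ob)"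

context monoid
begin

definition word_prod :: "'a list \<Rightarrow> 'a" where
  "word_prod w = foldr (\<otimes>) w \<one>"

lemma word_prod_simps [simp]: "word_prod [] = \<one>" "word_prod (g # w) = g \<otimes> word_prod w"
  by (simp_all add: word_prod_def)

lemma word_prod_closed [simp]: "set w \<subseteq> carrier G \<Longrightarrow> word_prod w \<in> carrier G"
  by (induction w) auto

lemma word_prod_append:
  "set u \<subseteq> carrier G \<Longrightarrow> set v \<subseteq> carrier G \<Longrightarrow> word_prod (u @ v) = word_prod u \<otimes> word_prod v"
  by (induction u) (auto simp: m_assoc)

end

context group
begin

lemma equipped_group_conj_closed:
  assumes "equipped_group G Ob"
  shows "conj_closed G Ob"
proof -
  from assms obtain C where C: "C \<subseteq> carrier G" "Ob = (\<Union>c\<in>C. conj_class G c)"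
    and Ob: "Ob \<subseteq> carrier G"
    unfolding equipped_group_def by blast
  have "a \<otimes> g \<otimes> inv a \<in> Ob" if "g \<in> Ob" "a \<in> carrier G" for g a
  proof -
    from that C obtain c h where c: "c \<in> C" "h \<in> carrier G" "g = h \<otimes> c \<otimes> inv h"
      unfolding conj_class_def by blast
    have "a \<otimes> g \<otimes> inv a = (a \<otimes> h) \<otimes> c \<otimes> inv (a \<otimes> h)"
      using c that C by (simp add: m_assoc inv_mult_group subsetD)
    then show ?thesis using c that C unfolding conj_class_def by blast
  qed
  with Ob show ?thesis unfolding conj_closed_def by blast
qed

lemma conj_closed_inv_conj:
  assumes "conj_closed G Ob" "g \<in> Ob" "a \<in> carrier G"
  shows "inv a \<otimes> g \<otimes> a \<in> Ob"
  using assms unfolding conj_closed_def by (metis inv_closed inv_inv)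

lemma fact_step_carrier:
  assumes "Ob \<subseteq> carrier G" "fact_step G Ob x y"
  shows "set x \<subseteq> carrier G \<longleftrightarrow> set y \<subseteq> carrier G"
  using assms(2) by cases (use assms(1) in auto)

lemma fact_step_word_prod:
  assumes Ob: "Ob \<subseteq> carrier G" and step: "fact_step G Ob x y" and x: "set x \<subseteq> carrier G"
  shows "word_prod x = word_prod y"
  using step
proof cases
  case (rel1 g1 g2 u v)
  then have "g1 \<in> carrier G" "g2 \<in> carrier G" "word_prod v \<in> carrier G"
    using Ob x by auto
  then have "g1 \<otimes> (g2 \<otimes> word_prod v) = g2 \<otimes> ((inv g2 \<otimes> g1 \<otimes> g2) \<otimes> word_prod v)"
    by (simp add: m_assoc[symmetric])
  then show ?thesis using rel1 Ob x by (simp add: word_prod_append)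
next
  case (rel2 g1 g2 u v)
  then have "g1 \<in> carrier G" "g2 \<in> carrier G" "word_prod v \<in> carrier G"
    using Ob x by auto
  then have "g1 \<otimes> (g2 \<otimes> word_prod v) = (g1 \<otimes> g2 \<otimes> inv g1) \<otimes> (g1 \<otimes> word_prod v)"
    by (simp add: m_assoc) (simp add: m_assoc[symmetric])
  then show ?thesis using rel2 Ob x by (simp add: word_prod_append)
qed

lemma fact_eq_word_prod:
  assumes Ob: "Ob \<subseteq> carrier G" and eq: "fact_eq G Ob x y" and x: "set x \<subseteq> carrier G"
  shows "word_prod x = word_prod y"
proof -
  from eq have "set y \<subseteq> carrier G \<and> word_prod x = word_prod y"
    unfolding fact_eq_def
  proof (induction rule: equivclp_induct)
    case base
    from x show ?case by simp
  next
    case (step y z)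
    then show ?case
      using fact_step_carrier[OF Ob] fact_step_word_prod[OF Ob] by (metis conversepD)
  qed
  then show ?thesis ..
qed

definition conj_word :: "'a \<Rightarrow> 'a list \<Rightarrow> 'a list" where
  "conj_word a t = map (\<lambda>g. inv a \<otimes> g \<otimes> a) t"

lemma conj_word_in_conj_closed:
  "conj_closed G Ob \<Longrightarrow> set t \<subseteq> Ob \<Longrightarrow> a \<in> carrier G \<Longrightarrow> set (conj_word a t) \<subseteq> Ob"
  unfolding conj_word_def using conj_closed_inv_conj by auto

lemma conj_word_inv_cancel:
  assumes "set t \<subseteq> carrier G" "a \<in> carrier G"
  shows "conj_word a (conj_word (inv a) t) = t"
  using assms unfolding conj_word_def by (induction t) (auto simp: m_assoc[symmetric], simp add: m_assoc)

lemma fact_eq_move_letter_right: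
  assumes cc: "conj_closed G Ob" and "g \<in> Ob" "set w \<subseteq> Ob"
  shows "fact_eq G Ob (g # w) (w @ conj_word (word_prod w) [g])"
  using assms(2,3)
proof (induction w arbitrary: g)
  case Nil
  then have "g \<in> carrier G" using cc unfolding conj_closed_def by blast
  then show ?case by (simp add: conj_word_def fact_eq_refl)
next
  case (Cons h w)
  have Ob: "Ob \<subseteq> carrier G" using cc unfolding conj_closed_def by blast
  with Cons.prems have hg: "h \<in> carrier G" "g \<in> carrier G" "word_prod w \<in> carrier G" by auto
  have g': "inv h \<otimes> g \<otimes> h \<in> Ob" using conj_closed_inv_conj[OF cc] Cons.prems hg by blast
  have "fact_eq G Ob (g # h # w) (h # inv h \<otimes> g \<otimes> h # w)"
    unfolding fact_eq_def using fact_step.rel1[of g Ob h G "[]" w] Cons.prems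
    by (simp add: r_into_equivclp)
  moreover have "fact_eq G Ob ([h] @ (inv h \<otimes> g \<otimes> h # w) @ [])
      ([h] @ (w @ conj_word (word_prod w) [inv h \<otimes> g \<otimes> h]) @ [])"
    using Cons g' by (intro fact_eq_append_context) auto
  moreover have "conj_word (word_prod w) [inv h \<otimes> g \<otimes> h] = conj_word (word_prod (h # w)) [g]"
    using hg by (simp add: conj_word_def inv_mult_group m_assoc)
  ultimately show ?case by (auto intro: fact_eq_trans)
qed

lemma fact_eq_move_word_right:
  assumes cc: "conj_closed G Ob" and "set t \<subseteq> Ob" "set w \<subseteq> Ob"
  shows "fact_eq G Ob (t @ w) (w @ conj_word (word_prod w) t)"
  using assms(2)
proof (induction t)
  case Nil
  then show ?case by (simp add: conj_word_def fact_eq_refl)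
next
  case (Cons g t)
  let ?c = "conj_word (word_prod w)"
  have "fact_eq G Ob ([g] @ (t @ w) @ []) ([g] @ (w @ ?c t) @ [])"
    using Cons by (intro fact_eq_append_context) auto
  moreover have "fact_eq G Ob ([] @ (g # w) @ ?c t) ([] @ (w @ ?c [g]) @ ?c t)"
    using Cons assms(3) by (intro fact_eq_append_context fact_eq_move_letter_right[OF cc]) auto
  ultimately show ?case by (auto simp: conj_word_def intro: fact_eq_trans)
qed

lemma fact_eq_move_word_left:
  assumes cc: "conj_closed G Ob" and t: "set t \<subseteq> Ob" and w: "set w \<subseteq> Ob"
  shows "fact_eq G Ob (w @ t) (conj_word (inv (word_prod w)) t @ w)"
proof -
  have Ob: "Ob \<subseteq> carrier G" using cc unfolding conj_closed_def by blast
  then have p: "word_prod w \<in> carrier G" using w by auto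
  let ?t' = "conj_word (inv (word_prod w)) t"
  have "set ?t' \<subseteq> Ob" using conj_word_in_conj_closed[OF cc t] p by simp
  from fact_eq_move_word_right[OF cc this w] show ?thesis
    using conj_word_inv_cancel t Ob p by (metis fact_eq_sym order_trans)
qed

lemma s_equiv_word_prod_eq:
  assumes Ob: "Ob \<subseteq> carrier G" and "s_equiv G Ob s1 s2"
    and s1: "set s1 \<subseteq> carrier G" and s2: "set s2 \<subseteq> carrier G"
  shows "word_prod s1 = word_prod s2"
proof -
  from assms(2) obtain s3 s4 where "fact_word Ob s3" "fact_word Ob s4"
    and eq: "fact_eq G Ob (s3 @ s1 @ s4) (s3 @ s2 @ s4)"
    unfolding s_equiv_def by blast
  then have s3: "set s3 \<subseteq> carrier G" and s4: "set s4 \<subseteq> carrier G"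
    using Ob unfolding fact_word_def by auto
  have "word_prod s3 \<otimes> (word_prod s1 \<otimes> word_prod s4) = word_prod s3 \<otimes> (word_prod s2 \<otimes> word_prod s4)"
    using fact_eq_word_prod[OF Ob eq] s1 s2 s3 s4 by (simp add: word_prod_append)
  then show ?thesis using s1 s2 s3 s4 by simp
qed

lemma s_equiv_imp_r_equiv:
  assumes cc: "conj_closed G Ob" and equiv: "s_equiv G Ob s1 s2"
    and s1: "set s1 \<subseteq> Ob" and s2: "set s2 \<subseteq> Ob"
  shows "r_equiv G Ob s1 s2"
proof -
  have Ob: "Ob \<subseteq> carrier G" using cc unfolding conj_closed_def by blast
  from equiv obtain s3 s4 where s3: "fact_word Ob s3" and s4: "fact_word Ob s4"
    and eq: "fact_eq G Ob (s3 @ s1 @ s4) (s3 @ s2 @ s4)"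
    unfolding s_equiv_def by blast
  define p where "p = word_prod s1"
  have p: "p \<in> carrier G" using s1 Ob unfolding p_def by auto
  have p2: "word_prod s2 = p"
    using s_equiv_word_prod_eq[OF Ob equiv] s1 s2 Ob unfolding p_def by auto
  have move: "fact_eq G Ob (s3 @ s @ s4) (s @ conj_word p s3 @ s4)"
    if "set s \<subseteq> Ob" "word_prod s = p" for s
    using fact_eq_append_context[OF fact_eq_move_word_right[OF cc _ that(1)], of s3 "[]" s4]
      s3 that unfolding fact_word_def by auto
  have "fact_eq G Ob (s1 @ conj_word p s3 @ s4) (s2 @ conj_word p s3 @ s4)"
    using move[OF s1 p_def[symmetric]] move[OF s2 p2] eq by (meson fact_eq_sym fact_eq_trans)
  moreover have "fact_word Ob (conj_word p s3 @ s4)"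
    using conj_word_in_conj_closed[OF cc _ p] s3 s4 unfolding fact_word_def by auto
  ultimately show ?thesis unfolding r_equiv_def by blast
qed

lemma s_equiv_imp_l_equiv:
  assumes cc: "conj_closed G Ob" and equiv: "s_equiv G Ob s1 s2"
    and s1: "set s1 \<subseteq> Ob" and s2: "set s2 \<subseteq> Ob"
  shows "l_equiv G Ob s1 s2"
proof -
  have Ob: "Ob \<subseteq> carrier G" using cc unfolding conj_closed_def by blast
  from equiv obtain s3 s4 where s3: "fact_word Ob s3" and s4: "fact_word Ob s4"
    and eq: "fact_eq G Ob (s3 @ s1 @ s4) (s3 @ s2 @ s4)"
    unfolding s_equiv_def by blast
  define p where "p = word_prod s1"
  have inv_p: "inv p \<in> carrier G" using s1 Ob unfolding p_def by auto
  have p2: "word_prod s2 = p"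
    using s_equiv_word_prod_eq[OF Ob equiv] s1 s2 Ob unfolding p_def by auto
  have move: "fact_eq G Ob (s3 @ s @ s4) (s3 @ conj_word (inv p) s4 @ s)"
    if "set s \<subseteq> Ob" "word_prod s = p" for s
    using fact_eq_append_context[OF fact_eq_move_word_left[OF cc _ that(1)], where p = s3 and q = "[]"]
      s4 that unfolding fact_word_def by auto
  have "fact_eq G Ob ((s3 @ conj_word (inv p) s4) @ s1) ((s3 @ conj_word (inv p) s4) @ s2)"
    using move[OF s1 p_def[symmetric]] move[OF s2 p2] eq by (simp, meson fact_eq_sym fact_eq_trans)
  moreover have "fact_word Ob (s3 @ conj_word (inv p) s4)"
    using conj_word_in_conj_closed[OF cc _ inv_p] s3 s4 unfolding fact_word_def by auto
  ultimately show ?thesis unfolding l_equiv_def by blast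
qed

end

lemma r_equiv_imp_s_equiv:
  assumes "fact_word Ob s1" "r_equiv G Ob s1 s2"
  shows "s_equiv G Ob s1 s2"
proof -
  from assms(2) obtain s3 where "fact_word Ob s3" "fact_eq G Ob (s1 @ s3) (s2 @ s3)"
    unfolding r_equiv_def by blast
  with assms(1) show ?thesis
    unfolding s_equiv_def by (metis append.assoc append_Nil2 fact_eq_append_context)
qed

lemma l_equiv_imp_s_equiv:
  assumes "fact_word Ob s1" "l_equiv G Ob s1 s2"
  shows "s_equiv G Ob s1 s2"
proof -
  from assms(2) obtain s3 where "fact_word Ob s3" "fact_eq G Ob (s3 @ s1) (s3 @ s2)"
    unfolding l_equiv_def by blast
  with assms(1) show ?thesis
    unfolding s_equiv_def by (metis append.assoc append_Nil fact_eq_append_context)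
qed

theorem lemma3p1:
  fixes G :: "('a, 'b) monoid_scheme" and Ob :: "'a set" and s1 s2 :: "'a list"
  assumes "equipped_group G Ob"
    and "fact_word Ob s1" and "fact_word Ob s2"
  shows "(r_equiv G Ob s1 s2 \<longleftrightarrow> l_equiv G Ob s1 s2) \<and> (l_equiv G Ob s1 s2 \<longleftrightarrow> s_equiv G Ob s1 s2)"
proof -
  interpret group G using assms(1) unfolding equipped_group_def by blast
  have cc: "conj_closed G Ob" using equipped_group_conj_closed assms(1) .
  have "set s1 \<subseteq> Ob" "set s2 \<subseteq> Ob" using assms(2,3) unfolding fact_word_def by auto
  then have "s_equiv G Ob s1 s2 \<Longrightarrow> r_equiv G Ob s1 s2 \<and> l_equiv G Ob s1 s2"
    using s_equiv_imp_r_equiv[OF cc] s_equiv_imp_l_equiv[OF cc] by blast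
  then show ?thesis using r_equiv_imp_s_equiv l_equiv_imp_s_equiv assms(2) by blast
qed

end
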